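(* For every $n\ge 4$, $\beta(P_\infty\,\Box\, K_n)=n-1$, and $S=\{(0,0),(0,1),\dots,(0,n-2)\}$ is a metric basis of $P_\infty\,\Box\, K_n$.
   Context: $P_\infty$ has vertex set $\mathbb N=\{0,1,2,\dots\}$ with $i,j$ adjacent iff $|i-j|=1$. $K_n$ is the complete graph on vertex set $\{0,1,\dots,n-1\}$. The cartesian product $G\Box H$ has vertex set $V(G)\times V(H)$, where $(a,v)$ is adjacent to $(b,w)$ iff either $a=b$ and $vw\in E(H)$, or $v=w$ and $ab\in E(G)$. A vertex $x$ resolves $u,v$ if $d(u,x)\ne d(v,x)$ (shortest-path distance); a resolving set is a set of vertices resolving every pair of distinct vertices; $\beta$ is the minimum cardinality of a resolving set ($\infty$ if none is finite), and a metric basis is a resolving set of cardinality $\beta$. *)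

theory Defs
  imports Main "HOL-Library.Extended_Nat"
begin

text \<open>A graph is given by a vertex set V and an adjacency relation E (intended
symmetric and irreflexive on V).\<close>

definition is_walk :: "'a set \<Rightarrow> ('a \<Rightarrow> 'a \<Rightarrow> bool) \<Rightarrow> 'a list \<Rightarrow> bool" where
  "is_walk V E ws \<longleftrightarrow> ws \<noteq> [] \<and> set ws \<subseteq> V \<and>
     (\<forall>i. Suc i < length ws \<longrightarrow> E (ws ! i) (ws ! Suc i))"

text \<open>Shortest-path distance (number of edges), \<infinity> if not connected.\<close>
definition gdist :: "'a set \<Rightarrow> ('a \<Rightarrow> 'a \<Rightarrow> bool) \<Rightarrow> 'a \<Rightarrow> 'a \<Rightarrow> enat" where
  "gdist V E u v = (INF ws \<in> {ws. is_walk V E ws \<and> hd ws = u \<and> last ws = v}.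
                      enat (length ws - 1))"

definition resolves :: "'a set \<Rightarrow> ('a \<Rightarrow> 'a \<Rightarrow> bool) \<Rightarrow> 'a \<Rightarrow> 'a \<Rightarrow> 'a \<Rightarrow> bool" where
  "resolves V E x u v \<longleftrightarrow> gdist V E u x \<noteq> gdist V E v x"

definition resolving_set :: "'a set \<Rightarrow> ('a \<Rightarrow> 'a \<Rightarrow> bool) \<Rightarrow> 'a set \<Rightarrow> bool" where
  "resolving_set V E W \<longleftrightarrow> W \<subseteq> V \<and>
     (\<forall>u\<in>V. \<forall>v\<in>V. u \<noteq> v \<longrightarrow> (\<exists>x\<in>W. resolves V E x u v))"

text \<open>Metric dimension beta; \<infinity> if no finite resolving set exists.\<close>
definition metric_dim :: "'a set \<Rightarrow> ('a \<Rightarrow> 'a \<Rightarrow> bool) \<Rightarrow> enat" where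
  "metric_dim V E = (INF W \<in> {W. resolving_set V E W \<and> finite W}. enat (card W))"

definition metric_basis :: "'a set \<Rightarrow> ('a \<Rightarrow> 'a \<Rightarrow> bool) \<Rightarrow> 'a set \<Rightarrow> bool" where
  "metric_basis V E W \<longleftrightarrow> resolving_set V E W \<and> finite W \<and> enat (card W) = metric_dim V E"

definition box_V :: "'a set \<Rightarrow> 'b set \<Rightarrow> ('a \<times> 'b) set" where
  "box_V VG VH = VG \<times> VH"

definition box_E :: "('a \<Rightarrow> 'a \<Rightarrow> bool) \<Rightarrow> ('b \<Rightarrow> 'b \<Rightarrow> bool) \<Rightarrow> ('a \<times> 'b) \<Rightarrow> ('a \<times> 'b) \<Rightarrow> bool" where
  "box_E EG EH p q \<longleftrightarrow> (fst p = fst q \<and> EH (snd p) (snd q)) \<or> (snd p = snd q \<and> EG (fst p) (fst q))"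

definition Pinf_V :: "nat set" where "Pinf_V = UNIV"
definition Pinf_E :: "nat \<Rightarrow> nat \<Rightarrow> bool" where "Pinf_E i j \<longleftrightarrow> i = j + 1 \<or> j = i + 1"

definition K_V :: "nat \<Rightarrow> nat set" where "K_V n = {0..<n}"
definition K_E :: "nat \<Rightarrow> nat \<Rightarrow> bool" where "K_E i j \<longleftrightarrow> i \<noteq> j"

end

theory Submission
  imports Defs
begin

(* In P_inf \<box> K_n the distance between (a,x) and (b,y) is
   |a - b| + [x \<noteq> y]: a walk can change the level a only by one per step,
   and a clique-edge costs one extra step exactly when the columns differ.
   Lower bound: two vertices (0,x), (0,y) in columns not met by a resolving
   set W are at the same distance from every vertex of W, so W meets all
   columns but one, whence |W| \<ge> n - 1.  Upper bound: S = {(0,j) | j \<le> n-2}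
   resolves everything; on one level a column of S separates the two columns,
   and on different levels (this is where n \<ge> 4 is used) some column of S
   avoids both columns, and from it the distances are a + 1 and b + 1.
   The file first develops general facts on walks, distances and metric
   bases for arbitrary graphs, then computes the distance in P_inf \<box> K_n,
   then proves the two bounds, and finally combines them. *)

lemma is_walk_Cons_iff:
  "is_walk V E (v # ws) \<longleftrightarrow> v \<in> V \<and> (ws = [] \<or> (E v (hd ws) \<and> is_walk V E ws))"
proof (cases ws)
  case Nil
  then show ?thesis by (simp add: is_walk_def)
next
  case (Cons w ws')
  have split_index: "(\<forall>i. P i) \<longleftrightarrow> P 0 \<and> (\<forall>i. P (Suc i))" for P :: "nat \<Rightarrow> bool"
    by (metis not0_implies_Suc)
  have "(\<forall>i. Suc i < Suc (length ws) \<longrightarrow> E ((v # ws) ! i) ((v # ws) ! Suc i)) \<longleftrightarrow>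
        E v w \<and> (\<forall>i. Suc i < length ws \<longrightarrow> E (ws ! i) (ws ! Suc i))"
    using Cons by (subst split_index) simp
  then show ?thesis using Cons by (auto simp: is_walk_def)
qed

lemma gdist_le_walk:
  assumes "is_walk V E ws"
  shows "gdist V E (hd ws) (last ws) \<le> enat (length ws - 1)"
  unfolding gdist_def using assms by (auto intro: INF_lower)

lemma gdist_ge_potential:
  fixes d :: "'a \<Rightarrow> 'a \<Rightarrow> nat"
  assumes diag: "\<And>r. d r r = 0"
    and step: "\<And>p q r. E p q \<Longrightarrow> d p r \<le> 1 + d q r"
  shows "enat (d u v) \<le> gdist V E u v"
proof -
  have walk_bound: "d (hd ws) (last ws) \<le> length ws - 1" if "is_walk V E ws" for ws
    using that
  proof (induction ws)
    case Nil
    then show ?case by (simp add: is_walk_def)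
  next
    case (Cons w ws)
    show ?case
    proof (cases "ws = []")
      case True
      then show ?thesis by (simp add: diag)
    next
      case False
      with Cons.prems have "E w (hd ws)" "is_walk V E ws"
        by (auto simp: is_walk_Cons_iff)
      with Cons.IH step[of w "hd ws" "last ws"] False show ?thesis
        by (cases ws) auto
    qed
  qed
  show ?thesis
    unfolding gdist_def by (rule INF_greatest) (auto dest: walk_bound)
qed

lemma metric_basisI:
  assumes res: "resolving_set V E W" and fin: "finite W"
    and minimal: "\<And>W'. resolving_set V E W' \<Longrightarrow> finite W' \<Longrightarrow> card W \<le> card W'"
  shows "metric_dim V E = enat (card W) \<and> metric_basis V E W"
proof -
  have "metric_dim V E = enat (card W)"
    unfolding metric_dim_def
  proof (rule antisym)
    show "(INF W'\<in>{W'. resolving_set V E W' \<and> finite W'}. enat (card W')) \<le> enat (card W)"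
      using res fin by (auto intro: INF_lower)
    show "enat (card W) \<le> (INF W'\<in>{W'. resolving_set V E W' \<and> finite W'}. enat (card W'))"
      using minimal by (auto intro: INF_greatest)
  qed
  then show ?thesis using res fin by (simp add: metric_basis_def)
qed

abbreviation prism_V :: "nat \<Rightarrow> (nat \<times> nat) set" where
  "prism_V n \<equiv> box_V Pinf_V (K_V n)"

abbreviation prism_E :: "nat \<times> nat \<Rightarrow> nat \<times> nat \<Rightarrow> bool" where
  "prism_E \<equiv> box_E Pinf_E K_E"

definition prism_dist :: "nat \<times> nat \<Rightarrow> nat \<times> nat \<Rightarrow> nat" where
  "prism_dist p q = (max (fst p) (fst q) - min (fst p) (fst q)) + (if snd p = snd q then 0 else 1)"

lemma prism_V_iff [simp]: "(a, x) \<in> prism_V n \<longleftrightarrow> x < n"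
  by (simp add: box_V_def Pinf_V_def K_V_def)

lemma prism_E_iff:
  "prism_E p q \<longleftrightarrow> (fst p = fst q \<and> snd p \<noteq> snd q)
     \<or> (snd p = snd q \<and> (fst p = fst q + 1 \<or> fst q = fst p + 1))"
  by (auto simp: box_E_def Pinf_E_def K_E_def)


lemma column_walk:
  assumes "x < n"
  shows "\<exists>ws. is_walk (prism_V n) prism_E ws \<and> hd ws = (a, x) \<and> last ws = (b, x)
           \<and> length ws = Suc (max a b - min a b)"
  using assms
proof (induction "max a b - min a b" arbitrary: a)
  case 0
  then show ?case by (intro exI[of _ "[(a, x)]"]) (auto simp: is_walk_def)
next
  case (Suc k)
  define a' where "a' = (if a < b then a + 1 else a - 1)"
  have "k = max a' b - min a' b" using Suc.hyps(2) by (auto simp: a'_def)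
  then obtain ws where ws: "is_walk (prism_V n) prism_E ws" "hd ws = (a', x)"
      "last ws = (b, x)" "length ws = Suc k"
    using Suc by blast
  have "prism_E (a, x) (a', x)" using Suc.hyps(2) by (auto simp: a'_def prism_E_iff)
  then show ?case
    using ws Suc.hyps(2) Suc.prems
    by (intro exI[of _ "(a, x) # ws"]) (auto simp: is_walk_Cons_iff)
qed

lemma prism_walk:
  assumes "x < n" "y < n"
  shows "\<exists>ws. is_walk (prism_V n) prism_E ws \<and> hd ws = (a, x) \<and> last ws = (b, y)
           \<and> length ws - 1 = prism_dist (a, x) (b, y)"
proof -
  obtain ws where ws: "is_walk (prism_V n) prism_E ws" "hd ws = (a, y)" "last ws = (b, y)"
      "length ws = Suc (max a b - min a b)"
    using column_walk[OF assms(2)] by blast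
  show ?thesis
  proof (cases "x = y")
    case True
    then show ?thesis using ws by (auto simp: prism_dist_def)
  next
    case False
    then have "is_walk (prism_V n) prism_E ((a, x) # ws)"
      using ws assms by (auto simp: is_walk_Cons_iff prism_E_iff)
    then show ?thesis
      using ws False by (intro exI[of _ "(a, x) # ws"]) (auto simp: prism_dist_def)
  qed
qed


theorem prism_gdist:
  assumes "p \<in> prism_V n" "q \<in> prism_V n"
  shows "gdist (prism_V n) prism_E p q = enat (prism_dist p q)"
proof (rule antisym)
  obtain a x b y where pq: "p = (a, x)" "q = (b, y)" by (cases p, cases q)
  with assms have "x < n" "y < n" by auto
  then obtain ws where "is_walk (prism_V n) prism_E ws" "hd ws = p" "last ws = q"
      "length ws - 1 = prism_dist p q"
    using prism_walk pq by blast
  then show "gdist (prism_V n) prism_E p q \<le> enat (prism_dist p q)"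
    using gdist_le_walk by metis
  show "enat (prism_dist p q) \<le> gdist (prism_V n) prism_E p q"
    by (rule gdist_ge_potential) (auto simp: prism_dist_def prism_E_iff)
qed

text \<open>Two vertices of level 0 in columns not met by W are equidistant from
  every vertex of W; hence a resolving set misses at most one column.\<close>
lemma resolving_set_card_ge:
  assumes res: "resolving_set (prism_V n) prism_E W" and fin: "finite W"
  shows "n - 1 \<le> card W"
proof -
  have WV: "W \<subseteq> prism_V n" using res by (simp add: resolving_set_def)
  let ?C = "snd ` W"
  have C: "?C \<subseteq> {0..<n}" using WV by (auto simp: box_V_def K_V_def)
  have missed: "card ({0..<n} - ?C) \<le> Suc 0"
  proof (rule iffD2[OF card_le_Suc0_iff_eq], simp, intro ballI)
    fix x y assume xy: "x \<in> {0..<n} - ?C" "y \<in> {0..<n} - ?C"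
    show "x = y"
    proof (rule ccontr)
      assume "x \<noteq> y"
      moreover have "(0, x) \<in> prism_V n" "(0, y) \<in> prism_V n" using xy by auto
      ultimately obtain w where w: "w \<in> W" "resolves (prism_V n) prism_E w (0, x) (0, y)"
        using res unfolding resolving_set_def by blast
      have "w \<in> prism_V n" "snd w \<noteq> x" "snd w \<noteq> y" using w WV xy by auto
      then show False using w(2) xy by (simp add: resolves_def prism_gdist prism_dist_def)
    qed
  qed
  have "n = card ?C + card ({0..<n} - ?C)"
    using C card_Diff_subset[of ?C "{0..<n}"] card_mono[OF _ C] finite_subset[OF C]
    by simp
  moreover have "card ?C \<le> card W" by (rule card_image_le[OF fin])
  ultimately show ?thesis using missed by linarith
qed


text \<open>The distance from (0,j) to (a,x) is a, or a+1 when j \<noteq> x; this is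
  all that is needed to separate two vertices by some column j \<le> n-2.\<close>
lemma base_column_separates:
  assumes "4 \<le> n" "x < n" "y < n" "(a, x) \<noteq> (b, y)"
  shows "\<exists>j \<le> n - 2. prism_dist (a, x) (0, j) \<noteq> prism_dist (b, y) (0, j)"
proof (cases "a = b")
  case True
  with assms have "x \<noteq> y" by auto
  then have "x \<le> n - 2 \<or> y \<le> n - 2" using assms by linarith
  then show ?thesis using \<open>x \<noteq> y\<close> True by (auto simp: prism_dist_def)
next
  case False
  have "card {x, y} \<le> 2" by (simp add: card_insert_le_m1)
  then have "\<not> {..n - 2} \<subseteq> {x, y}"
    using card_mono[of "{x, y}" "{..n - 2}"] assms(1) by auto
  then obtain j where "j \<le> n - 2" "j \<noteq> x" "j \<noteq> y" by auto
  then show ?thesis using False by (auto simp: prism_dist_def)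
qed


lemma base_resolving_set:
  assumes "4 \<le> n"
  shows "resolving_set (prism_V n) prism_E {(0, j) | j. j \<le> n - 2}"
  unfolding resolving_set_def
proof (intro conjI ballI impI)
  show "{(0, j) | j. j \<le> n - 2} \<subseteq> prism_V n" using assms by auto
  fix u v assume uv: "u \<in> prism_V n" "v \<in> prism_V n" "u \<noteq> v"
  obtain a x b y where u: "u = (a, x)" and v: "v = (b, y)" by (cases u, cases v)
  have "x < n" "y < n" "(a, x) \<noteq> (b, y)" using uv u v by auto
  then obtain j where "j \<le> n - 2" "prism_dist u (0, j) \<noteq> prism_dist v (0, j)"
    using base_column_separates[OF assms] u v by blast
  then show "\<exists>w\<in>{(0, j) | j. j \<le> n - 2}. resolves (prism_V n) prism_E w u v"
    using uv assms by (intro bexI[of _ "(0, j)"]) (auto simp: resolves_def prism_gdist)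
qed


theorem proposition8:
  fixes n :: nat
  assumes "n \<ge> 4"
  shows "metric_dim (box_V Pinf_V (K_V n)) (box_E Pinf_E K_E) = enat (n - 1)
    \<and> metric_basis (box_V Pinf_V (K_V n)) (box_E Pinf_E K_E) {(0, j) | j. j \<le> n - 2}"
proof -
  let ?S = "{(0::nat, j) | j. j \<le> n - 2}"
  have S_image: "?S = (\<lambda>j. (0, j)) ` {..n - 2}" by auto
  have "finite ?S" unfolding S_image by simp
  moreover have "card ?S = n - 1"
    unfolding S_image using assms by (subst card_image) (auto simp: inj_on_def)
  ultimately show ?thesis
    using metric_basisI[OF base_resolving_set[OF assms]] resolving_set_card_ge[of n]
    by simp
qed


end
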